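(* Let $\Sigma$ be a finite alphabet with $|\Sigma|\ge 2$, and let $\delta$ be a uniform Hamming compatible metric on $\Sigma^*$. Then $\delta(u,v)\ge d_2(u,v)$ for all $u,v\in\Sigma^*$. In particular, $\delta(u,v)\to\infty$ as $|l(u)-l(v)|\to\infty$.
   Context: For a finite alphabet $\Sigma$, $\Sigma_n$ denotes the set of words of length $n$ over $\Sigma$, $\Sigma^*=\bigcup_{n\ge 0}\Sigma_n$ is the set of all finite words, $l(u)$ is the length of $u$, and $\varepsilon$ is the empty word. $H$ denotes the usual Hamming distance between two words of equal length (the number of positions where they differ). The truncated Hamming function is defined for arbitrary $u,v\in\Sigma^*$ as follows: if $l(u)\ge l(v)$, let $\underline{u}$ be the prefix of $u$ of length $l(v)$ and $\underline{v}=v$ (symmetrically if $l(v)\ge l(u)$), and $H(\underline{u},\underline{v})$ is the Hamming distance of these two equal-length words. All metrics are integer-valued. A metric $\delta$ on $\Sigma^*$ is Hamming compatible if $\delta(u,v)=H(u,v)$ whenever $l(u)=l(v)$. Define $d_2(u,v)=H(\underline{u},\underline{v})+\lceil |l(u)-l(v)|/2\rceil$. Two words $u,v$ of the same length $n$ are Hamming opposites if $H(u,v)=n$. For a Hamming compatible metric $\delta$ put $\gamma(u,v)=\delta(u,v)-H(\underline{u},\underline{v})$. $\delta$ is called uniform if for every $n$ and every pair of Hamming opposites $u,v\in\Sigma_n$ one has $\gamma(u,w)=\gamma(v,w)$ for all $w\in\Sigma^*$. *)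

theory Defs
  imports Complex_Main
begin

definition hamming :: "'a list \<Rightarrow> 'a list \<Rightarrow> nat" where
  "hamming u v = card {i. i < length u \<and> i < length v \<and> u ! i \<noteq> v ! i}"

definition trunc_hamming :: "'a list \<Rightarrow> 'a list \<Rightarrow> nat" where
  "trunc_hamming u v =
     (let m = min (length u) (length v) in hamming (take m u) (take m v))"

definition d2 :: "'a list \<Rightarrow> 'a list \<Rightarrow> int" where
  "d2 u v = int (trunc_hamming u v)
            + \<lceil>real_of_int \<bar>int (length u) - int (length v)\<bar> / 2\<rceil>"

definition is_metric :: "('a list \<Rightarrow> 'a list \<Rightarrow> int) \<Rightarrow> bool" where
  "is_metric \<delta> \<longleftrightarrow>
     (\<forall>u v. \<delta> u v \<ge> 0) \<and>
     (\<forall>u v. \<delta> u v = 0 \<longleftrightarrow> u = v) \<and>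
     (\<forall>u v. \<delta> u v = \<delta> v u) \<and>
     (\<forall>u v w. \<delta> u w \<le> \<delta> u v + \<delta> v w)"

definition hamming_compatible :: "('a list \<Rightarrow> 'a list \<Rightarrow> int) \<Rightarrow> bool" where
  "hamming_compatible \<delta> \<longleftrightarrow>
     (\<forall>u v. length u = length v \<longrightarrow> \<delta> u v = int (hamming u v))"

definition hamming_opposites :: "'a list \<Rightarrow> 'a list \<Rightarrow> bool" where
  "hamming_opposites u v \<longleftrightarrow> length u = length v \<and> hamming u v = length u"

definition gamma :: "('a list \<Rightarrow> 'a list \<Rightarrow> int) \<Rightarrow> 'a list \<Rightarrow> 'a list \<Rightarrow> int" where
  "gamma \<delta> u v = \<delta> u v - int (trunc_hamming u v)"

definition uniform :: "('a list \<Rightarrow> 'a list \<Rightarrow> int) \<Rightarrow> bool" where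
  "uniform \<delta> \<longleftrightarrow>
     (\<forall>u v. hamming_opposites u v \<longrightarrow> (\<forall>w. gamma \<delta> u w = gamma \<delta> v w))"

end

theory Submission
  imports Defs
begin

(* By symmetry of delta and d2 we may assume l(v) <= l(u) = n.  Since the
   alphabet has two letters, u has a Hamming opposite w of length n which, on
   the first l(v) positions, agrees with v wherever u does not; then
   H(u|,v) + H(w|,v) = l(v).  Uniformity gives gamma(u,v) = gamma(w,v), and the
   triangle inequality through v gives
     n = delta(u,w) <= delta(u,v) + delta(w,v) = l(v) + 2 gamma(u,v),
   i.e. gamma(u,v) >= ceil((n - l(v))/2), which is exactly delta(u,v) >= d2(u,v). *)

lemma trunc_hamming_shorter:
  assumes "length v \<le> length u"
  shows "trunc_hamming u v = card {i. i < length v \<and> u ! i \<noteq> v ! i}"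
proof -
  have "min (length u) (length v) = length v" using assms by simp
  then show ?thesis unfolding trunc_hamming_def hamming_def Let_def
    by (intro arg_cong[where f=card]) (auto simp: nth_take assms)
qed

text \<open>Both d2 and the truncated Hamming function are symmetric, which lets us
  assume that the first word is the longer one.\<close>
lemma trunc_hamming_sym: "trunc_hamming u v = trunc_hamming v u"
  unfolding trunc_hamming_def hamming_def Let_def
  by (simp add: min.commute conj_commute eq_commute)

lemma d2_sym: "d2 u v = d2 v u"
  unfolding d2_def by (simp add: trunc_hamming_sym abs_minus_commute)

lemma d2_ge_half_length_gap:
  "\<bar>int (length u) - int (length v)\<bar> \<le> 2 * d2 u v"
proof -
  define D where "D = \<bar>int (length u) - int (length v)\<bar>"
  define c where "c = \<lceil>real_of_int D / 2\<rceil>"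
  have "real_of_int D / 2 \<le> real_of_int c"
    unfolding c_def by (rule le_of_int_ceiling)
  then have "real_of_int D \<le> real_of_int (2 * c)" by simp
  then have "D \<le> 2 * c" by (simp only: of_int_le_iff)
  then show ?thesis unfolding d2_def D_def c_def by (simp add: algebra_simps)
qed

lemma exists_other_letter:
  assumes "card (UNIV :: 'a::finite set) \<ge> 2"
  shows "\<exists>b::'a. b \<noteq> a"
proof (rule ccontr)
  assume "\<not> (\<exists>b. b \<noteq> a)"
  then have univ: "(UNIV :: 'a set) = {a}" by auto
  have "card (UNIV :: 'a set) = 1" by (simp only: univ) simp
  with assms show False by linarith
qed

definition opposite_toward :: "('a \<Rightarrow> 'a) \<Rightarrow> 'a list \<Rightarrow> 'a list \<Rightarrow> 'a list" where
  "opposite_toward f u v =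
     map (\<lambda>i. if i < length v \<and> u ! i \<noteq> v ! i then v ! i else f (u ! i)) [0..<length u]"

lemma length_opposite_toward [simp]: "length (opposite_toward f u v) = length u"
  by (simp add: opposite_toward_def)

lemma nth_opposite_toward:
  "i < length u \<Longrightarrow> opposite_toward f u v ! i =
     (if i < length v \<and> u ! i \<noteq> v ! i then v ! i else f (u ! i))"
  by (simp add: opposite_toward_def)

lemma opposite_toward_opposite:
  assumes "\<And>a. f a \<noteq> a"
  shows "hamming_opposites u (opposite_toward f u v)"
proof -
  let ?w = "opposite_toward f u v"
  have "u ! i \<noteq> ?w ! i" if "i < length u" for i
    using that assms[of "u ! i"] by (auto simp: nth_opposite_toward)
  then have "{i. i < length u \<and> i < length ?w \<and> u ! i \<noteq> ?w ! i} = {..<length u}"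
    by auto
  then show ?thesis unfolding hamming_opposites_def hamming_def by simp
qed

text \<open>On the positions of v, the opposite word differs from v exactly where u agrees
  with v, so the two truncated distances to v add up to l(v).\<close>
lemma opposite_toward_trunc_hamming_sum:
  assumes "\<And>a. f a \<noteq> a" and len: "length v \<le> length u"
  shows "trunc_hamming u v + trunc_hamming (opposite_toward f u v) v = length v"
proof -
  let ?w = "opposite_toward f u v"
  let ?Diff = "{i. i < length v \<and> u ! i \<noteq> v ! i}"
  let ?Same = "{i. i < length v \<and> u ! i = v ! i}"
  have "?w ! i \<noteq> v ! i \<longleftrightarrow> u ! i = v ! i" if "i < length v" for i
  proof -
    have "i < length u" using that len by simp
    then show ?thesis using that assms(1)[of "u ! i"] by (auto simp: nth_opposite_toward)
  qed
  then have "{i. i < length v \<and> ?w ! i \<noteq> v ! i} = ?Same" by auto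
  then have w: "trunc_hamming ?w v = card ?Same"
    using trunc_hamming_shorter[of v ?w] len by simp
  have "card ?Diff + card ?Same = card (?Diff \<union> ?Same)"
    by (rule card_Un_disjoint[symmetric]) auto
  also have "?Diff \<union> ?Same = {..<length v}" by auto
  finally show ?thesis using w trunc_hamming_shorter[OF len] by simp
qed

text \<open>Core estimate: the triangle inequality through v, together with uniformity,
  bounds the length excess of u over v by twice gamma(u,v).\<close>
lemma length_gap_le_gamma:
  assumes met: "is_metric \<delta>" and hc: "hamming_compatible \<delta>" and un: "uniform \<delta>"
    and opp: "hamming_opposites u w"
    and trunc_sum: "trunc_hamming u v + trunc_hamming w v = length v"
  shows "int (length u) \<le> int (length v) + 2 * gamma \<delta> u v"
proof -
  have "\<delta> u w = int (length u)"
    using hc opp unfolding hamming_compatible_def hamming_opposites_def by simp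
  moreover have "\<delta> u w \<le> \<delta> u v + \<delta> w v"
    using met unfolding is_metric_def by metis
  moreover have "int (trunc_hamming u v) + int (trunc_hamming w v) = int (length v)"
    using trunc_sum by (metis of_nat_add)
  moreover have "gamma \<delta> w v = gamma \<delta> u v"
    using un opp unfolding uniform_def by metis
  ultimately show ?thesis unfolding gamma_def by (smt (verit))
qed

lemma d2_le_longer_first:
  fixes \<delta> :: "('a::finite) list \<Rightarrow> 'a list \<Rightarrow> int"
  assumes card: "card (UNIV :: 'a set) \<ge> 2"
    and met: "is_metric \<delta>" and hc: "hamming_compatible \<delta>" and un: "uniform \<delta>"
    and len: "length v \<le> length u"
  shows "d2 u v \<le> \<delta> u v"
proof -
  define f where "f a = (SOME b::'a. b \<noteq> a)" for a
  have f: "f a \<noteq> a" for a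
    unfolding f_def using someI_ex[OF exists_other_letter[OF card]] by blast
  have "int (length u) \<le> int (length v) + 2 * gamma \<delta> u v"
    by (rule length_gap_le_gamma[OF met hc un opposite_toward_opposite
          opposite_toward_trunc_hamming_sum[OF _ len]]) (use f in auto)
  then have "real_of_int \<bar>int (length u) - int (length v)\<bar> / 2 \<le> gamma \<delta> u v"
    using len by simp
  then have "\<lceil>real_of_int \<bar>int (length u) - int (length v)\<bar> / 2\<rceil> \<le> gamma \<delta> u v"
    by (simp add: ceiling_le_iff)
  then show ?thesis unfolding d2_def gamma_def by linarith
qed

lemma d2_le:
  fixes \<delta> :: "('a::finite) list \<Rightarrow> 'a list \<Rightarrow> int"
  assumes "card (UNIV :: 'a set) \<ge> 2"
    and met: "is_metric \<delta>" and "hamming_compatible \<delta>" and "uniform \<delta>"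
  shows "d2 u v \<le> \<delta> u v"
proof (cases "length v \<le> length u")
  case True
  then show ?thesis using d2_le_longer_first assms by blast
next
  case False
  then have "d2 v u \<le> \<delta> v u" using d2_le_longer_first assms by fastforce
  moreover have "\<delta> v u = \<delta> u v" using met unfolding is_metric_def by metis
  ultimately show ?thesis by (simp add: d2_sym)
qed

theorem theorem4p9:
  fixes \<delta> :: "('a::finite) list \<Rightarrow> 'a list \<Rightarrow> int"
  assumes "card (UNIV :: 'a set) \<ge> 2"
    and "is_metric \<delta>"
    and "hamming_compatible \<delta>"
    and "uniform \<delta>"
  shows "(\<forall>u v. \<delta> u v \<ge> d2 u v) \<and>
         (\<forall>M::int. \<exists>N::nat. \<forall>u v.
            N \<le> nat \<bar>int (length u) - int (length v)\<bar> \<longrightarrow> M \<le> \<delta> u v)"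
proof -
  have lower: "d2 u v \<le> \<delta> u v" for u v using d2_le[OF assms] .
  have "M \<le> \<delta> u v"
    if "nat (2 * M) \<le> nat \<bar>int (length u) - int (length v)\<bar>" for M :: int and u v :: "'a list"
    using that d2_ge_half_length_gap[of u v] lower[of u v] by linarith
  then show ?thesis using lower by blast
qed

end
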